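(* If an infinite binary word $w$ is not weak abelian periodic, then the frequencies of letters in $w$ exist.
   Context: For a finite word $u$, $|u|_a$ is the number of occurrences of the letter $a$ in $u$, and $\rho_a(u)=|u|_a/|u|$ for nonempty $u$. The frequency of a letter $a$ in an infinite word $w$ is $\lim_{n\to\infty}\rho_a(\mathrm{pref}_n(w))$ (if it exists), with $\mathrm{pref}_n(w)$ the prefix of length $n$. An infinite word $w$ over $\Sigma$ is weak abelian periodic if $w=v_0v_1v_2\cdots$ with $v_0$ finite and $v_1,v_2,\dots$ nonempty finite words such that $\rho_a(v_i)=\rho_a(v_j)$ for all $a\in\Sigma$ and all $i,j\ge1$. *)

theory Defs
  imports Complex_Main
begin

definition occ :: "'a list \<Rightarrow> 'a \<Rightarrow> nat" where
  "occ u a = count_list u a"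

definition rho :: "'a \<Rightarrow> 'a list \<Rightarrow> real" where
  "rho a u = real (occ u a) / real (length u)"

definition pref :: "nat \<Rightarrow> (nat \<Rightarrow> 'a) \<Rightarrow> 'a list" where
  "pref n w = map w [0..<n]"

definition frequency_exists :: "(nat \<Rightarrow> 'a) \<Rightarrow> 'a \<Rightarrow> bool" where
  "frequency_exists w a = convergent (\<lambda>n. rho a (pref n w))"

text \<open>w = v 0 \<cdot> v 1 \<cdot> v 2 \<cdots> (v 0 plays the role of the finite prefix v_0).\<close>
definition is_infinite_concat :: "(nat \<Rightarrow> 'a) \<Rightarrow> (nat \<Rightarrow> 'a list) \<Rightarrow> bool" where
  "is_infinite_concat w v =
     (\<forall>k. let u = concat (map v [0..<k]) in pref (length u) w = u)"

definition weak_abelian_periodic :: "(nat \<Rightarrow> 'a) \<Rightarrow> bool" where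
  "weak_abelian_periodic w =
     (\<exists>v. is_infinite_concat w v \<and> (\<forall>i\<ge>1. v i \<noteq> []) \<and>
          (\<forall>a i j. i \<ge> 1 \<longrightarrow> j \<ge> 1 \<longrightarrow> rho a (v i) = rho a (v j)))"

end

theory Submission
  imports Defs "HOL-Library.Extended_Real" "HOL-Library.Liminf_Limsup"
begin

text \<open>
  If the frequency of a letter a does not exist, the densities of a in the prefixes oscillate
  around some rational p/q. The integer-valued balance q |pref n w|_a - p n then grows by at most
  q - p per step and is infinitely often non-positive and infinitely often positive, so it
  crosses the bounded window (p - q, 0] infinitely often and hence takes some value c
  infinitely often. Between two times with balance c the factor of w has a-density exactly p/q
  (and, the alphabet being binary, the density of the other letter is 1 - p/q), so cutting w
  at these times exhibits it as weak abelian periodic.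
\<close>

lemma bounded_nonconvergent_oscillates:
  fixes x :: "nat \<Rightarrow> real"
  assumes "Bseq x" and "\<not> convergent x"
  obtains r where "r \<in> \<rat>" "infinite {n. x n < r}" "infinite {n. r < x n}"
proof -
  obtain K where bound: "\<And>n. \<bar>x n\<bar> \<le> K" using BseqE[OF assms(1)] by auto
  have K: "- K \<le> x n" "x n \<le> K" for n using bound[of n] by linarith+
  define L where "L = liminf (\<lambda>n. ereal (x n))"
  define U where "U = limsup (\<lambda>n. ereal (x n))"
  have "ereal (- K) \<le> L"
    unfolding L_def by (intro Liminf_bounded always_eventually) (simp add: K)
  moreover have "U \<le> ereal K"
    unfolding U_def by (intro Limsup_bounded always_eventually) (simp add: K)
  moreover have "L \<le> U" unfolding L_def U_def by (rule Liminf_le_Limsup) simp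
  ultimately obtain l u where l: "L = ereal l" and u: "U = ereal u"
    by (cases L; cases U) auto
  have "l < u"
  proof (rule ccontr)
    assume "\<not> l < u"
    with \<open>L \<le> U\<close> l u have "(\<lambda>n. ereal (x n)) \<longlonglongrightarrow> ereal l"
      by (intro Liminf_eq_Limsup) (auto simp: L_def U_def)
    with assms(2) show False by (auto simp: convergent_def)
  qed
  then obtain r where r: "r \<in> \<rat>" "l < r" "r < u" using Rats_dense_in_real by blast
  have "infinite {n. x n < r}"
  proof
    assume "finite {n. x n < r}"
    hence "eventually (\<lambda>n. ereal r \<le> ereal (x n)) sequentially"
      by (auto simp: cofinite_eq_sequentially[symmetric] eventually_cofinite not_le)
    hence "ereal r \<le> L" unfolding L_def by (rule Liminf_bounded)
    with l r show False by simp
  qed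
  moreover have "infinite {n. r < x n}"
  proof
    assume "finite {n. r < x n}"
    hence "eventually (\<lambda>n. ereal (x n) \<le> ereal r) sequentially"
      by (auto simp: cofinite_eq_sequentially[symmetric] eventually_cofinite not_le)
    hence "U \<le> ereal r" unfolding U_def by (rule Limsup_bounded)
    with u r show False by simp
  qed
  ultimately show thesis using r(1) that by blast
qed

lemma bounded_step_upcrossing:
  fixes g :: "nat \<Rightarrow> int"
  assumes step: "\<And>n. g (Suc n) \<le> g n + d" and "g m \<le> 0" and "m < k" and "0 < g k"
  shows "\<exists>n. m \<le> n \<and> n < k \<and> - d < g n \<and> g n \<le> 0"
  using assms(3,4)
proof (induction k)
  case 0
  then show ?case by simp
next
  case (Suc k)
  show ?case
  proof (cases "g k \<le> 0")
    case True
    with step[of k] Suc.prems show ?thesis by (intro exI[of _ k]) auto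
  next
    case False
    with \<open>g m \<le> 0\<close> Suc.prems have "m < k" by (cases "m = k") auto
    with Suc.IH False show ?thesis by force
  qed
qed

text \<open>Every upcrossing of 0 passes through the finite window (-d, 0], so some value in it recurs.\<close>

lemma bounded_step_walk_recurrent_value:
  fixes g :: "nat \<Rightarrow> int"
  assumes step: "\<And>n. g (Suc n) \<le> g n + d"
    and nonpos: "infinite {n. g n \<le> 0}" and pos: "infinite {n. 0 < g n}"
  obtains c where "infinite {n. g n = c}"
proof -
  define S where "S = {n. g n \<in> {- d<..0}}"
  have "\<exists>n\<ge>N. n \<in> S" for N
  proof -
    obtain m where "m \<ge> N" "g m \<le> 0"
      using nonpos by (auto simp: infinite_nat_iff_unbounded_le)
    moreover obtain k where "m < k" "0 < g k"
      using pos unfolding infinite_nat_iff_unbounded_le by (metis Suc_le_eq mem_Collect_eq)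
    ultimately obtain n where "m \<le> n" "- d < g n" "g n \<le> 0"
      using bounded_step_upcrossing[of g d, OF step] by blast
    with \<open>m \<ge> N\<close> show ?thesis by (intro exI[of _ n]) (auto simp: S_def)
  qed
  hence "infinite S" by (simp add: infinite_nat_iff_unbounded_le)
  moreover have "finite (g ` S)"
    by (rule finite_subset[of _ "{- d<..0}"]) (auto simp: S_def)
  ultimately obtain n0 where "infinite {n \<in> S. g n = g n0}"
    using pigeonhole_infinite by blast
  hence "infinite {n. g n = g n0}" by (rule infinite_super[rotated]) auto
  then show thesis by (rule that)
qed

lemma length_pref [simp]: "length (pref n w) = n"
  by (simp add: pref_def)

lemma pref_append_factor: "s \<le> t \<Longrightarrow> pref t w = pref s w @ map w [s..<t]"
  unfolding pref_def by (metis map_append le_add_diff_inverse upt_add_eq_append zero_le)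

lemma occ_pref_append_factor:
  "s \<le> t \<Longrightarrow> occ (pref t w) a = occ (pref s w) a + occ (map w [s..<t]) a"
  by (simp add: occ_def pref_append_factor[of s t w])

lemma occ_pref_Suc: "occ (pref (Suc n) w) a = occ (pref n w) a + (if w n = a then 1 else 0)"
  using occ_pref_append_factor[of n "Suc n" w a] by (simp add: occ_def)

lemma rho_bounds: "0 \<le> rho a u" "rho a u \<le> 1"
  unfolding rho_def occ_def
  by (simp_all add: count_le_length divide_le_eq_1)

lemma
  fixes p q :: int
  assumes "u \<noteq> []" and "0 < q"
  shows rho_less_rat_iff:
      "rho a u < of_int p / of_int q \<longleftrightarrow> q * int (occ u a) < p * int (length u)"
    and rat_less_rho_iff:
      "of_int p / of_int q < rho a u \<longleftrightarrow> p * int (length u) < q * int (occ u a)"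
    and rho_eq_rat_iff:
      "rho a u = of_int p / of_int q \<longleftrightarrow> q * int (occ u a) = p * int (length u)"
proof -
  have l: "0 < real (length u)" and q: "0 < real_of_int q" using assms by simp_all
  have "rho a u < of_int p / of_int q \<longleftrightarrow>
      real_of_int (q * int (occ u a)) < real_of_int (p * int (length u))"
    unfolding rho_def using l q by (simp add: field_simps)
  then show "rho a u < of_int p / of_int q \<longleftrightarrow> q * int (occ u a) < p * int (length u)"
    by (simp only: of_int_less_iff)
  have "of_int p / of_int q < rho a u \<longleftrightarrow>
      real_of_int (p * int (length u)) < real_of_int (q * int (occ u a))"
    unfolding rho_def using l q by (simp add: field_simps)
  then show "of_int p / of_int q < rho a u \<longleftrightarrow> p * int (length u) < q * int (occ u a)"
    by (simp only: of_int_less_iff)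
  have "rho a u = of_int p / of_int q \<longleftrightarrow>
      real_of_int (q * int (occ u a)) = real_of_int (p * int (length u))"
    unfolding rho_def using l q by (simp add: field_simps)
  then show "rho a u = of_int p / of_int q \<longleftrightarrow> q * int (occ u a) = p * int (length u)"
    by (simp only: of_int_eq_iff)
qed

lemma rho_not_bool: "u \<noteq> [] \<Longrightarrow> rho (\<not> a) u = 1 - rho a (u :: bool list)"
proof -
  assume "u \<noteq> []"
  have "occ u (\<not> a) + occ u a = length u"
    unfolding occ_def by (induction u) auto
  hence "real (occ u (\<not> a)) = real (length u) - real (occ u a)" by linarith
  with \<open>u \<noteq> []\<close> show ?thesis
    unfolding rho_def by (simp add: diff_divide_distrib)
qed

definition balance :: "int \<Rightarrow> int \<Rightarrow> 'a \<Rightarrow> (nat \<Rightarrow> 'a) \<Rightarrow> nat \<Rightarrow> int" where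
  "balance p q a w n = q * int (occ (pref n w) a) - p * int n"

lemma balance_Suc_le: "0 < q \<Longrightarrow> balance p q a w (Suc n) \<le> balance p q a w n + (q - p)"
  by (simp add: balance_def occ_pref_Suc algebra_simps)

lemma
  fixes p q :: int
  assumes "0 < n" and "0 < q"
  shows rho_pref_less_rat_iff: "rho a (pref n w) < of_int p / of_int q \<longleftrightarrow> balance p q a w n < 0"
    and rat_less_rho_pref_iff: "of_int p / of_int q < rho a (pref n w) \<longleftrightarrow> 0 < balance p q a w n"
proof -
  have "pref n w \<noteq> []" using assms(1) by (simp add: pref_def)
  from rho_less_rat_iff[OF this assms(2)] rat_less_rho_iff[OF this assms(2)]
  show "rho a (pref n w) < of_int p / of_int q \<longleftrightarrow> balance p q a w n < 0"
    and "of_int p / of_int q < rho a (pref n w) \<longleftrightarrow> 0 < balance p q a w n"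
    by (simp_all add: balance_def)
qed

lemma rho_factor_eq_rat_if_balance_eq:
  fixes p q :: int
  assumes "s < t" and "0 < q" and "balance p q a w s = balance p q a w t"
  shows "rho a (map w [s..<t]) = of_int p / of_int q"
proof -
  define u where "u = map w [s..<t]"
  have "int (occ (pref t w) a) = int (occ (pref s w) a) + int (occ u a)"
    using occ_pref_append_factor[of s t w a] \<open>s < t\<close> by (simp add: u_def)
  moreover have "p * int (length u) = p * int t - p * int s"
    using \<open>s < t\<close> by (simp add: u_def of_nat_diff right_diff_distrib)
  ultimately have "q * int (occ u a) = p * int (length u)"
    using assms(3) by (simp add: balance_def algebra_simps)
  moreover have "u \<noteq> []" using \<open>s < t\<close> by (simp add: u_def)
  ultimately show ?thesis
    unfolding u_def[symmetric] by (simp add: rho_eq_rat_iff[OF _ assms(2)])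
qed

lemma weak_abelian_periodic_if_uniform_factors:
  assumes "infinite T"
    and uniform: "\<And>a s t. s \<in> T \<Longrightarrow> t \<in> T \<Longrightarrow> s < t \<Longrightarrow> rho a (map w [s..<t]) = f a"
  shows "weak_abelian_periodic w"
proof -
  define e where "e = enumerate T"
  have e_in: "e i \<in> T" for i using enumerate_in_set[OF assms(1)] by (simp add: e_def)
  have e_step: "e i < e (Suc i)" for i using enumerate_step[OF assms(1)] by (simp add: e_def)
  define v where "v i = (if i = 0 then pref (e 0) w else map w [e (i - 1)..<e i])" for i
  have concat_v: "concat (map v [0..<Suc k]) = pref (e k) w" for k
  proof (induction k)
    case 0
    then show ?case by (simp add: v_def)
  next
    case (Suc k)
    then show ?case
      using pref_append_factor[OF less_imp_le[OF e_step], of k w] by (simp add: v_def)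
  qed
  have "is_infinite_concat w v"
    unfolding is_infinite_concat_def Let_def
  proof
    fix k
    show "pref (length (concat (map v [0..<k]))) w = concat (map v [0..<k])"
      by (cases k) (simp add: pref_def, simp only: concat_v length_pref)
  qed
  moreover have "v i \<noteq> []" if "i \<ge> 1" for i
    using that e_step[of "i - 1"] by (simp add: v_def)
  moreover have "rho a (v i) = f a" if "i \<ge> 1" for a i
    using that uniform[OF e_in e_in e_step[of "i - 1"]] by (simp add: v_def)
  ultimately show ?thesis
    unfolding weak_abelian_periodic_def by metis
qed

lemma weak_abelian_periodic_if_no_frequency:
  fixes w :: "nat \<Rightarrow> bool"
  assumes "\<not> frequency_exists w a"
  shows "weak_abelian_periodic w"
proof -
  define x where "x = (\<lambda>n. rho a (pref n w))"
  have "Bseq x" by (rule BseqI'[of _ 1]) (simp add: x_def rho_bounds)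
  moreover have "\<not> convergent x" using assms by (simp add: frequency_exists_def x_def)
  ultimately obtain r where "r \<in> \<rat>"
    and below: "infinite {n. x n < r}" and above: "infinite {n. r < x n}"
    by (rule bounded_nonconvergent_oscillates)
  then obtain p q :: int where q: "0 < q" and r: "r = of_int p / of_int q"
    using Rats_cases' by metis
  let ?g = "balance p q a w"
  have "infinite {n. ?g n \<le> 0}"
    by (rule infinite_super[of "{n. x n < r} - {0}"])
      (use below q in \<open>auto simp: x_def r rho_pref_less_rat_iff\<close>)
  moreover have "infinite {n. 0 < ?g n}"
    by (rule infinite_super[of "{n. r < x n} - {0}"])
      (use above q in \<open>auto simp: x_def r rat_less_rho_pref_iff\<close>)
  ultimately obtain c where level: "infinite {n. ?g n = c}"
    using bounded_step_walk_recurrent_value balance_Suc_le[OF q] by metis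
  have "rho b (map w [s..<t]) = (if b = a then r else 1 - r)"
    if "s \<in> {n. ?g n = c}" "t \<in> {n. ?g n = c}" "s < t" for b s t
  proof -
    have "?g s = ?g t" using that by simp
    with \<open>s < t\<close> q have "rho a (map w [s..<t]) = r"
      unfolding r by (rule rho_factor_eq_rat_if_balance_eq)
    moreover have "map w [s..<t] \<noteq> []" using \<open>s < t\<close> by simp
    moreover have "b = a \<or> b = (\<not> a)" by auto
    ultimately show ?thesis using rho_not_bool by auto
  qed
  with level show ?thesis by (rule weak_abelian_periodic_if_uniform_factors)
qed

theorem corollary1:
  fixes w :: "nat \<Rightarrow> bool"
  assumes "\<not> weak_abelian_periodic w"
  shows "\<forall>a. frequency_exists w a"
  using weak_abelian_periodic_if_no_frequency assms by blast

end
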